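(* Let $\sigma$ be a completely erasing $k$-block substitution with $w_\epsilon\ne1^k$ that satisfies the optimality condition. Then $f_\sigma$ is Devaney chaotic. That is: (a) there is a point whose $f_\sigma$-orbit is dense in $\mathbb I$; (b) the $f_\sigma$-periodic points are dense in $\mathbb I$; (c) $f_\sigma$ has sensitive dependence on initial conditions.
   Context: Notation: $\mathbb I=[0,1]$. $\{0,1\}^*$ and $\{0,1\}^\omega$ denote finite and infinite binary words, and $\epsilon$ is the empty word. For a word $w$, set $0.w=\sum_iw_i2^{-i}$. For $x\in(0,1]$, $\widetilde x$ is the unique infinite binary expansion of $x$ not ending in $0^\infty$. Fix $k\ge2$. An erasing $k$-block substitution is a map $\sigma:\{0,1\}^k\to\{0,1\}^*$ with exactly one block $w_\epsilon$ such that $\sigma(w_\epsilon)=\epsilon$. $\sigma$ is alternating if there are $\sigma_1,\dots,\sigma_k:\{0,1\}\to\{0,1\}^*$ with $\sigma(b_1\cdots b_k)=\sigma_1(b_1)\cdots\sigma_k(b_k)$. It is then extended to all finite or infinite words by $\sigma(u)=\prod_j\sigma_{((j-1)\bmod k)+1}(u_j)$. $\sigma$ is completely erasing if it is erasing and alternating, and every $w\in\{0,1\}^*$ satisfies $\sigma^n(w)=\epsilon$ for some $n\in\mathbb N$. The map $f_\sigma:\mathbb I\to\mathbb I$ is defined by $f_\sigma(x)=0.\sigma(\widetilde x)$ if $x\in(0,1]$ and $\widetilde x\neq w_\epsilon^\infty$, and $f_\sigma(x)=0$ otherwise. Optimality condition: every $w\in\{0,1\}^\omega$ can be written as $w=\prod_{i\ge1}\sigma(b_i)$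 with blocks $b_i\in\{0,1\}^k$ satisfying $\sigma(b_i)\ne\epsilon$. Sensitive dependence: there is $c>0$ such that for all $x\in\mathbb I$ and $\delta>0$ there exist $z$ with $|x-z|<\delta$ and $n\in\mathbb N$ with $|f_\sigma^n(x)-f_\sigma^n(z)|\ge c$. *)

theory Defs
  imports Complex_Main
begin

text \<open>Bits are booleans: True stands for 1, False for 0. Words are 0-indexed.
  An alternating k-block substitution is given by its letter maps
  s i :: bool \<Rightarrow> bool list for i < k (s i corresponds to sigma_(i+1)).\<close>

definition blk :: "nat \<Rightarrow> (nat \<Rightarrow> bool \<Rightarrow> bool list) \<Rightarrow> bool list \<Rightarrow> bool list" where
  "blk k s b = concat (map (\<lambda>i. s i (b ! i)) [0..<k])"

definition ext_fin :: "nat \<Rightarrow> (nat \<Rightarrow> bool \<Rightarrow> bool list) \<Rightarrow> bool list \<Rightarrow> bool list" where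
  "ext_fin k s u = concat (map (\<lambda>j. s (j mod k) (u ! j)) [0..<length u])"

definition erasing :: "nat \<Rightarrow> (nat \<Rightarrow> bool \<Rightarrow> bool list) \<Rightarrow> bool" where
  "erasing k s \<longleftrightarrow> (\<exists>!w. length w = k \<and> blk k s w = [])"

definition w_eps :: "nat \<Rightarrow> (nat \<Rightarrow> bool \<Rightarrow> bool list) \<Rightarrow> bool list" where
  "w_eps k s = (THE w. length w = k \<and> blk k s w = [])"

definition completely_erasing :: "nat \<Rightarrow> (nat \<Rightarrow> bool \<Rightarrow> bool list) \<Rightarrow> bool" where
  "completely_erasing k s \<longleftrightarrow> erasing k s \<and> (\<forall>w. \<exists>n. (ext_fin k s ^^ n) w = [])"

definition val_fin :: "bool list \<Rightarrow> real" where
  "val_fin u = (\<Sum>i<length u. of_bool (u ! i) / 2 ^ Suc i)"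

definition val_inf :: "(nat \<Rightarrow> bool) \<Rightarrow> real" where
  "val_inf w = (\<Sum>i. of_bool (w i) / 2 ^ Suc i)"

text \<open>The value 0.sigma(x) of the (finite or infinite) word sigma(x) =
  prod_j s (j mod k) (x j): the j-th factor starts after L j letters.\<close>
definition pre_len :: "nat \<Rightarrow> (nat \<Rightarrow> bool \<Rightarrow> bool list) \<Rightarrow> (nat \<Rightarrow> bool) \<Rightarrow> nat \<Rightarrow> nat" where
  "pre_len k s x j = (\<Sum>i<j. length (s (i mod k) (x i)))"

definition val_sub :: "nat \<Rightarrow> (nat \<Rightarrow> bool \<Rightarrow> bool list) \<Rightarrow> (nat \<Rightarrow> bool) \<Rightarrow> real" where
  "val_sub k s x = (\<Sum>j. val_fin (s (j mod k) (x j)) / 2 ^ pre_len k s x j)"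

definition tilde :: "real \<Rightarrow> (nat \<Rightarrow> bool)" where
  "tilde x = (THE w. (\<forall>n. \<exists>m>n. w m) \<and> val_inf w = x)"

definition f_sigma :: "nat \<Rightarrow> (nat \<Rightarrow> bool \<Rightarrow> bool list) \<Rightarrow> real \<Rightarrow> real" where
  "f_sigma k s x =
     (if 0 < x \<and> x \<le> 1 \<and> tilde x \<noteq> (\<lambda>j. w_eps k s ! (j mod k))
      then val_sub k s (tilde x) else 0)"

text \<open>Optimality: every infinite word is a concatenation of non-erased block images.\<close>
definition optimal :: "nat \<Rightarrow> (nat \<Rightarrow> bool \<Rightarrow> bool list) \<Rightarrow> bool" where
  "optimal k s \<longleftrightarrow> (\<forall>w :: nat \<Rightarrow> bool. \<exists>b :: nat \<Rightarrow> bool list.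
     (\<forall>m. length (b m) = k \<and> blk k s (b m) \<noteq> []) \<and>
     (\<forall>m i. i < length (blk k s (b m)) \<longrightarrow>
        w ((\<Sum>l<m. length (blk k s (b l))) + i) = blk k s (b m) ! i))"

definition dense_orbit :: "(real \<Rightarrow> real) \<Rightarrow> bool" where
  "dense_orbit f \<longleftrightarrow> (\<exists>x\<in>{0..1}. \<forall>y\<in>{0..1}. \<forall>e>0. \<exists>n. \<bar>(f ^^ n) x - y\<bar> < e)"

definition dense_periodic :: "(real \<Rightarrow> real) \<Rightarrow> bool" where
  "dense_periodic f \<longleftrightarrow> (\<forall>y\<in>{0..1}. \<forall>e>0. \<exists>p\<in>{0..1}. \<bar>p - y\<bar> < e \<and> (\<exists>n>0. (f ^^ n) p = p))"

definition sensitive :: "(real \<Rightarrow> real) \<Rightarrow> bool" where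
  "sensitive f \<longleftrightarrow> (\<exists>c>0. \<forall>x\<in>{0..1}. \<forall>\<delta>>0. \<exists>z\<in>{0..1}. \<bar>x - z\<bar> < \<delta> \<and>
      (\<exists>n. \<bar>(f ^^ n) x - (f ^^ n) z\<bar> \<ge> c))"

end

theory Submission
  imports Defs "HOL-Library.Countable" "HOL-Library.Infinite_Set"
begin

(* A point whose binary expansion has infinitely many ones is determined by that expansion, and
   f_sigma acts on it as sigma acts on infinite words, unless the expansion is w_eps^infinity.
   By optimality every infinite word Y is the sigma-image of a word built from frames: a long run
   of erased blocks w_eps followed by a non-erased block whose image is the next piece of Y. The
   erased runs make this preimage agree on the first L letters whenever the images do, and the
   non-erased blocks keep it away from w_eps^infinity. As sigma erases every finite word v after
   finitely many steps, iterated preimages give, for every w, a point steer v w in the dyadic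
   interval of v that is mapped onto w by that many iterates of f_sigma. Since steer v w starts
   with v and its first L + |v| letters depend only on the first L letters of w, the maps
   w |-> steer v w, and the chains w_j = steer v_j w_(j+1) through all words v_j, have fixed
   points: periodic points in every dyadic interval and a point with dense orbit. Steering one
   interval onto both 1^infinity and 01^infinity gives sensitivity with constant 1/4. *)

section \<open>Infinite binary words and their values\<close>

definition prepend :: "'a list \<Rightarrow> (nat \<Rightarrow> 'a) \<Rightarrow> nat \<Rightarrow> 'a" where
  "prepend u W n = (if n < length u then u ! n else W (n - length u))"

definition eq_upto :: "nat \<Rightarrow> (nat \<Rightarrow> 'a) \<Rightarrow> (nat \<Rightarrow> 'a) \<Rightarrow> bool" where
  "eq_upto L X Y \<longleftrightarrow> (\<forall>n<L. X n = Y n)"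

lemma prepend_Nil [simp]: "prepend [] W = W"
  by (auto simp: prepend_def fun_eq_iff)

lemma prepend_append: "prepend (u @ v) W = prepend u (prepend v W)"
  by (auto simp: prepend_def fun_eq_iff nth_append)

lemma prepend_Cons: "prepend (a # u) W = prepend [a] (prepend u W)"
  using prepend_append[of "[a]" u W] by simp

lemma prepend_take_drop: "prepend (map W [0..<d]) (\<lambda>n. W (n + d)) = W"
  by (auto simp: prepend_def fun_eq_iff)

lemma INFM_prepend:
  assumes "\<exists>\<^sub>\<infinity>n. W n"
  shows "\<exists>\<^sub>\<infinity>n. prepend u W n"
  unfolding INFM_nat
proof
  fix n
  obtain m where "m > n" "W m" using assms unfolding INFM_nat by blast
  then show "\<exists>m>n. prepend u W m" by (intro exI[of _ "m + length u"]) (auto simp: prepend_def)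
qed

lemma INFM_shift:
  fixes W :: "nat \<Rightarrow> bool"
  assumes "\<exists>\<^sub>\<infinity>n. W n"
  shows "\<exists>\<^sub>\<infinity>n. W (n + d)"
  unfolding INFM_nat
proof
  fix n
  obtain m where "m > n + d" "W m" using assms unfolding INFM_nat by blast
  then show "\<exists>m>n. W (m + d)" by (intro exI[of _ "m - d"]) auto
qed

lemma eq_upto_prepend: "eq_upto L X Y \<Longrightarrow> eq_upto (L + length u) (prepend u X) (prepend u Y)"
  by (auto simp: eq_upto_def prepend_def)

lemma eq_upto_mono: "eq_upto L X Y \<Longrightarrow> L' \<le> L \<Longrightarrow> eq_upto L' X Y"
  by (auto simp: eq_upto_def)

lemma summable_val_inf: "summable (\<lambda>i. of_bool (W i) / 2 ^ Suc i :: real)"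
proof (rule summable_comparison_test'[of "\<lambda>i. (1/2) ^ Suc i"])
  show "summable (\<lambda>i. (1/2::real) ^ Suc i)"
    using power_half_series by (rule sums_summable)
qed (auto simp: power_divide)

lemma val_inf_nonneg: "0 \<le> val_inf W"
  unfolding val_inf_def by (rule suminf_nonneg[OF summable_val_inf]) auto

lemma val_inf_le_1: "val_inf W \<le> 1"
proof -
  have "val_inf W \<le> (\<Sum>n. (1/2::real) ^ Suc n)"
    unfolding val_inf_def using power_half_series
    by (intro suminf_le summable_val_inf) (auto simp: power_divide sums_iff)
  also have "\<dots> = 1" using power_half_series by (simp add: sums_iff)
  finally show ?thesis .
qed

lemma val_inf_pos: "W m \<Longrightarrow> 0 < val_inf W"
  unfolding val_inf_def by (rule suminf_pos2[OF summable_val_inf, of _ m]) auto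

lemma val_inf_const_True: "val_inf (\<lambda>_. True) = 1"
  unfolding val_inf_def using power_half_series by (simp add: sums_iff power_divide)

lemma val_inf_prepend: "val_inf (prepend u W) = val_fin u + val_inf W / 2 ^ length u"
proof -
  have "val_inf (prepend u W) = (\<Sum>n. of_bool (prepend u W (n + length u)) / 2 ^ Suc (n + length u))
      + (\<Sum>i<length u. of_bool (prepend u W i) / 2 ^ Suc i)"
    unfolding val_inf_def by (rule suminf_split_initial_segment[OF summable_val_inf])
  also have "(\<Sum>i<length u. of_bool (prepend u W i) / 2 ^ Suc i) = val_fin u"
    unfolding val_fin_def by (rule sum.cong) (auto simp: prepend_def)
  also have "(\<Sum>n. of_bool (prepend u W (n + length u)) / 2 ^ Suc (n + length u))
      = (\<Sum>n. (of_bool (W n) / 2 ^ Suc n) / 2 ^ length u :: real)"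
    by (simp add: prepend_def power_add mult.assoc)
  also have "\<dots> = val_inf W / 2 ^ length u"
    unfolding val_inf_def by (rule suminf_divide[OF summable_val_inf])
  finally show ?thesis by simp
qed

lemma val_inf_prepend_bounds:
  "val_fin u \<le> val_inf (prepend u W)" "val_inf (prepend u W) \<le> val_fin u + 1 / 2 ^ length u"
  using val_inf_prepend[of u W] val_inf_nonneg[of W] val_inf_le_1[of W]
  by (auto simp: divide_right_mono)

lemma val_inf_split: "val_inf W = val_fin (map W [0..<d]) + val_inf (\<lambda>n. W (n + d)) / 2 ^ d"
  using val_inf_prepend[of "map W [0..<d]" "\<lambda>n. W (n + d)"] unfolding prepend_take_drop by simp

lemma val_fin_snoc: "val_fin (v @ [b]) = val_fin v + of_bool b / 2 ^ Suc (length v)"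
  unfolding val_fin_def by (simp add: nth_append)

lemma dyadic_approximation:
  assumes "0 \<le> y" "y \<le> 1"
  shows "\<exists>v. length v = L \<and> val_fin v \<le> y \<and> y \<le> val_fin v + 1 / 2 ^ L"
proof (induction L)
  case 0
  then show ?case using assms by (auto simp: val_fin_def)
next
  case (Suc L)
  then obtain v where v: "length v = L" "val_fin v \<le> y" "y \<le> val_fin v + 1 / 2 ^ L" by blast
  show ?case
  proof (cases "val_fin v + 1 / 2 ^ Suc L \<le> y")
    case True
    then show ?thesis using v by (intro exI[of _ "v @ [True]"]) (auto simp: val_fin_snoc)
  next
    case False
    then show ?thesis using v by (intro exI[of _ "v @ [False]"]) (auto simp: val_fin_snoc)
  qed
qed

lemma short_dyadic_interval:
  fixes y e :: real
  assumes "0 \<le> y" "y \<le> 1" "0 < e"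
  shows "\<exists>v. v \<noteq> [] \<and> val_fin v \<le> y \<and> y \<le> val_fin v + 1 / 2 ^ length v \<and> 1 / 2 ^ length v < e"
proof -
  obtain n where "(1/2::real) ^ n < e" using real_arch_pow_inv[OF assms(3), of "1/2"] by auto
  moreover have "(1/2::real) ^ Suc n \<le> (1/2) ^ n" by simp
  ultimately have L: "1 / 2 ^ Suc n < e" by (simp add: power_divide)
  obtain v where "length v = Suc n" "val_fin v \<le> y" "y \<le> val_fin v + 1 / 2 ^ Suc n"
    using dyadic_approximation[OF assms(1,2)] by blast
  then show ?thesis using L by (intro exI[of _ v]) auto
qed

lemma val_inf_less_if_first_differs:
  assumes "\<exists>\<^sub>\<infinity>n. W n" "W 0" "\<not> V 0"
  shows "val_inf V < val_inf W"
proof -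
  have W: "val_inf W = 1/2 + val_inf (\<lambda>n. W (n + 1)) / 2"
    using val_inf_split[of W 1] assms(2) by (simp add: val_fin_def)
  have V: "val_inf V = val_inf (\<lambda>n. V (n + 1)) / 2"
    using val_inf_split[of V 1] assms(3) by (simp add: val_fin_def)
  obtain m where "W (m + 1)" using INFM_shift[OF assms(1), of 1] unfolding INFM_nat by blast
  then have "0 < val_inf (\<lambda>n. W (n + 1))" by (rule val_inf_pos)
  with W V val_inf_le_1[of "\<lambda>n. V (n + 1)"] show ?thesis by linarith
qed

lemma val_inf_inj:
  assumes "\<exists>\<^sub>\<infinity>n. W n" "\<exists>\<^sub>\<infinity>n. V n" "val_inf W = val_inf V"
  shows "W = V"
proof (rule ccontr)
  assume "W \<noteq> V"
  then have ex: "\<exists>n. W n \<noteq> V n" by (auto simp: fun_eq_iff)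
  define d where "d = (LEAST n. W n \<noteq> V n)"
  have differ: "W d \<noteq> V d" unfolding d_def by (rule LeastI_ex[OF ex])
  have "map W [0..<d] = map V [0..<d]"
  proof (rule map_cong[OF refl])
    fix n assume "n \<in> set [0..<d]"
    then show "W n = V n" using not_less_Least[of n "\<lambda>n. W n \<noteq> V n"] by (simp add: d_def)
  qed
  then have "val_fin (map W [0..<d]) = val_fin (map V [0..<d])" by (rule arg_cong)
  then have "val_inf (\<lambda>n. W (n + d)) / 2 ^ d = val_inf (\<lambda>n. V (n + d)) / 2 ^ d"
    using assms(3) val_inf_split[of W d] val_inf_split[of V d] by linarith
  then have "val_inf (\<lambda>n. W (n + d)) = val_inf (\<lambda>n. V (n + d))" by simp
  moreover have "val_inf (\<lambda>n. W (n + d)) \<noteq> val_inf (\<lambda>n. V (n + d))"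
    using val_inf_less_if_first_differs[OF INFM_shift[OF assms(1)], of d "\<lambda>n. V (n + d)"]
      val_inf_less_if_first_differs[OF INFM_shift[OF assms(2)], of d "\<lambda>n. W (n + d)"] differ
    by (cases "W d") auto
  ultimately show False by simp
qed

lemma tilde_val_inf:
  assumes "\<exists>\<^sub>\<infinity>n. W n"
  shows "tilde (val_inf W) = W"
  unfolding tilde_def
proof (rule the_equality)
  show "(\<forall>n. \<exists>m>n. W m) \<and> val_inf W = val_inf W" using assms by (simp add: INFM_nat)
next
  fix V assume "(\<forall>n. \<exists>m>n. V m) \<and> val_inf V = val_inf W"
  then show "V = W" using val_inf_inj[OF _ assms] by (auto simp: INFM_nat)
qed

section \<open>Concatenating infinitely many finite words\<close>

definition block_start :: "(nat \<Rightarrow> 'a list) \<Rightarrow> nat \<Rightarrow> nat" where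
  "block_start F j = (\<Sum>i<j. length (F i))"

definition concat_seq :: "(nat \<Rightarrow> bool list) \<Rightarrow> nat \<Rightarrow> bool" where
  "concat_seq F n =
     (if \<exists>j. n < block_start F (Suc j)
      then F (LEAST j. n < block_start F (Suc j)) ! (n - block_start F (LEAST j. n < block_start F (Suc j)))
      else False)"

lemma block_start_0 [simp]: "block_start F 0 = 0"
  by (simp add: block_start_def)

lemma block_start_Suc: "block_start F (Suc j) = block_start F j + length (F j)"
  by (simp add: block_start_def)

lemma block_start_Suc_shift: "block_start F (Suc j) = length (F 0) + block_start (\<lambda>j. F (Suc j)) j"
  unfolding block_start_def by (rule sum.lessThan_Suc_shift)

lemma block_start_mono: "j \<le> j' \<Longrightarrow> block_start F j \<le> block_start F j'"
  unfolding block_start_def by (rule sum_mono2) auto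

lemma concat_seq_at:
  assumes "block_start F j \<le> n" "n < block_start F (Suc j)"
  shows "concat_seq F n = F j ! (n - block_start F j)"
proof -
  have ex: "\<exists>j. n < block_start F (Suc j)" using assms by blast
  let ?j = "LEAST j. n < block_start F (Suc j)"
  have "?j \<le> j" using assms(2) by (rule Least_le)
  moreover have "\<not> ?j < j"
  proof
    assume "?j < j"
    then have "block_start F (Suc ?j) \<le> block_start F j" by (intro block_start_mono) auto
    with LeastI_ex[OF ex] assms(1) show False by linarith
  qed
  ultimately have "?j = j" by linarith
  then show ?thesis using ex by (simp add: concat_seq_def)
qed

lemma concat_seq_block: "i < length (F j) \<Longrightarrow> concat_seq F (block_start F j + i) = F j ! i"
  using concat_seq_at[of F j "block_start F j + i"] by (simp add: block_start_Suc)

lemma concat_seq_find: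
  assumes "n < block_start F (Suc j)"
  obtains j' where "block_start F j' \<le> n" "n < block_start F (Suc j')"
  using assms
proof (induction j)
  case 0
  then show ?case by (metis block_start_0 zero_le)
next
  case (Suc j)
  then show ?case by (cases "n < block_start F (Suc j)") (auto simp: not_less)
qed

lemma concat_seq_beyond: "\<not> (\<exists>j. n < block_start F (Suc j)) \<Longrightarrow> concat_seq F n = False"
  by (simp add: concat_seq_def)

lemma concat_seq_first_block: "n < length (F 0) \<Longrightarrow> concat_seq F n = F 0 ! n"
  using concat_seq_block[of n F 0] by simp

lemma concat_seq_later_blocks:
  assumes "length (F 0) \<le> n"
  shows "concat_seq F n = concat_seq (\<lambda>j. F (Suc j)) (n - length (F 0))"
proof (cases "\<exists>j. n < block_start F (Suc j)")
  case True
  then obtain j where j: "block_start F j \<le> n" "n < block_start F (Suc j)"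
    using concat_seq_find by blast
  then obtain j' where j': "j = Suc j'"
    using assms by (cases j) (auto simp: block_start_Suc)
  let ?G = "\<lambda>j. F (Suc j)"
  have "block_start ?G j' \<le> n - length (F 0)" "n - length (F 0) < block_start ?G (Suc j')"
    using j j' block_start_Suc_shift[of F j'] block_start_Suc_shift[of F "Suc j'"] by auto
  then have "concat_seq ?G (n - length (F 0)) = F (Suc j') ! (n - length (F 0) - block_start ?G j')"
    by (rule concat_seq_at)
  moreover have "concat_seq F n = F (Suc j') ! (n - block_start F (Suc j'))"
    using concat_seq_at[OF j] j' by simp
  ultimately show ?thesis using block_start_Suc_shift[of F j'] by simp
next
  case False
  have "\<not> (\<exists>j. n - length (F 0) < block_start (\<lambda>j. F (Suc j)) (Suc j))"
  proof
    assume "\<exists>j. n - length (F 0) < block_start (\<lambda>j. F (Suc j)) (Suc j)"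
    then obtain j where "n - length (F 0) < block_start (\<lambda>j. F (Suc j)) (Suc j)" ..
    then have "n < block_start F (Suc (Suc j))" using assms block_start_Suc_shift[of F "Suc j"] by simp
    then show False using False by blast
  qed
  then show ?thesis using False by (simp add: concat_seq_beyond)
qed

lemma concat_seq_unfold: "concat_seq F = prepend (F 0) (concat_seq (\<lambda>j. F (Suc j)))"
  by (auto simp: fun_eq_iff prepend_def concat_seq_first_block concat_seq_later_blocks)

lemma sum_lessThan_add:
  fixes g :: "nat \<Rightarrow> 'a::comm_monoid_add"
  shows "(\<Sum>n<a + b. g n) = (\<Sum>n<a. g n) + (\<Sum>i<b. g (a + i))"
  by (induction b) (auto simp: add.assoc)

lemma sum_blocks_eq_prefix_sum:
  "(\<Sum>j<J. val_fin (F j) / 2 ^ block_start F j)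
     = (\<Sum>n<block_start F J. of_bool (concat_seq F n) / 2 ^ Suc n :: real)"
proof (induction J)
  case 0
  then show ?case by simp
next
  case (Suc J)
  have "(\<Sum>i<length (F J). of_bool (concat_seq F (block_start F J + i)) / 2 ^ Suc (block_start F J + i) :: real)
     = (\<Sum>i<length (F J). (of_bool (F J ! i) / 2 ^ Suc i) / 2 ^ block_start F J)"
    by (intro sum.cong) (auto simp: concat_seq_block power_add mult_ac)
  also have "\<dots> = val_fin (F J) / 2 ^ block_start F J"
    unfolding val_fin_def by (simp add: sum_divide_distrib)
  finally show ?case
    using Suc by (simp add: block_start_Suc sum_lessThan_add)
qed

lemma block_start_tendsto:
  assumes "\<exists>\<^sub>\<infinity>n. concat_seq F n"
  shows "filterlim (block_start F) at_top sequentially"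
proof -
  have "\<exists>J. B \<le> block_start F J" for B
  proof -
    obtain m where m: "m > B" "concat_seq F m" using assms unfolding INFM_nat by blast
    then obtain j where "m < block_start F (Suc j)" using concat_seq_beyond by blast
    then show ?thesis using m(1) by (intro exI[of _ "Suc j"]) simp
  qed
  then show ?thesis
    unfolding filterlim_at_top eventually_sequentially
    by (meson block_start_mono order_trans)
qed

lemma sums_blocks_val_inf:
  assumes "\<exists>\<^sub>\<infinity>n. concat_seq F n"
  shows "(\<lambda>j. val_fin (F j) / 2 ^ block_start F j) sums val_inf (concat_seq F)"
proof -
  have "(\<lambda>N. \<Sum>n<N. of_bool (concat_seq F n) / 2 ^ Suc n :: real) \<longlonglongrightarrow> val_inf (concat_seq F)"
    unfolding val_inf_def by (rule summable_LIMSEQ[OF summable_val_inf])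
  then have "(\<lambda>J. \<Sum>n<block_start F J. of_bool (concat_seq F n) / 2 ^ Suc n :: real)
      \<longlonglongrightarrow> val_inf (concat_seq F)"
    by (rule filterlim_compose[OF _ block_start_tendsto[OF assms]])
  then show ?thesis
    by (simp add: sums_def sum_blocks_eq_prefix_sum)
qed

section \<open>A fixed point principle for prefix contractions\<close>

lemma prefix_contraction_fixpoint:
  fixes \<Psi> :: "('i \<Rightarrow> nat \<Rightarrow> 'b) \<Rightarrow> 'i \<Rightarrow> nat \<Rightarrow> 'b"
  assumes contr: "\<And>L R R'. (\<forall>i. eq_upto L (R i) (R' i)) \<Longrightarrow>
    (\<forall>i. eq_upto (Suc L) (\<Psi> R i) (\<Psi> R' i))"
  shows "\<exists>R. \<Psi> R = R"
proof -
  define Z where "Z j = (\<Psi> ^^ j) (\<lambda>_ _. undefined)" for j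
  have Z_Suc: "Z (Suc j) = \<Psi> (Z j)" for j by (simp add: Z_def)
  have "\<forall>i. eq_upto j (Z j i) (Z (j + d) i)" for j d
  proof (induction j arbitrary: d)
    case 0
    then show ?case by (simp add: eq_upto_def)
  next
    case (Suc j)
    then show ?case using contr[of j "Z j" "Z (j + d)"] by (simp add: Z_Suc)
  qed
  then have Z_stable: "Z m i n = Z m' i n" if "n < m" "m \<le> m'" for m m' i n
    using that by (metis eq_upto_def le_add_diff_inverse)
  define R where "R i n = Z (Suc n) i n" for i n
  have R_Z: "\<forall>i. eq_upto L (R i) (Z L i)" for L
    by (auto simp: eq_upto_def R_def intro: Z_stable)
  have "\<Psi> R i n = R i n" for i n
    using contr[OF R_Z[of n]] by (simp add: eq_upto_def R_def Z_Suc)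
  then show ?thesis by (intro exI[of _ R]) (auto simp: fun_eq_iff)
qed

section \<open>Preimages under the substitution\<close>

locale erasing_substitution =
  fixes k :: nat and s :: "nat \<Rightarrow> bool \<Rightarrow> bool list"
  assumes k_pos: "0 < k"
    and complete_erasure: "completely_erasing k s"
    and optimality: "optimal k s"
begin

text \<open>In \<open>subst_word p u\<close> and \<open>subst_seq p X\<close> the first letter sits at position \<open>p\<close>,
  which selects the letter map applied to it.\<close>

primrec subst_word :: "nat \<Rightarrow> bool list \<Rightarrow> bool list" where
  "subst_word p [] = []"
| "subst_word p (a # u) = s (p mod k) a @ subst_word (Suc p) u"

definition subst_seq :: "nat \<Rightarrow> (nat \<Rightarrow> bool) \<Rightarrow> nat \<Rightarrow> bool" where
  "subst_seq p X = concat_seq (\<lambda>j. s ((p + j) mod k) (X j))"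

lemma subst_word_conv_concat:
  "subst_word p u = concat (map (\<lambda>j. s ((p + j) mod k) (u ! j)) [0..<length u])"
proof (induction u arbitrary: p)
  case Nil
  then show ?case by simp
next
  case (Cons a u)
  have "[0..<length (a # u)] = 0 # map Suc [0..<length u]"
    by (simp add: upt_conv_Cons map_Suc_upt del: upt_Suc)
  then show ?case using Cons[of "Suc p"] by (simp add: o_def del: upt_Suc)
qed

lemma ext_fin_eq_subst_word: "ext_fin k s u = subst_word 0 u"
  unfolding ext_fin_def subst_word_conv_concat by simp

lemma blk_eq_subst_word: "length b = k \<Longrightarrow> blk k s b = subst_word 0 b"
  unfolding blk_def subst_word_conv_concat by (intro arg_cong[of _ _ concat] map_cong) auto

lemma subst_word_append: "subst_word p (u @ w) = subst_word p u @ subst_word (p + length u) w"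
  by (induction u arbitrary: p) auto

lemma subst_word_mod: "subst_word p u = subst_word (p mod k) u"
  unfolding subst_word_conv_concat by (simp add: mod_add_left_eq)

lemma subst_seq_mod: "subst_seq p = subst_seq (p mod k)"
  unfolding subst_seq_def by (simp add: mod_add_left_eq fun_eq_iff)

lemma subst_seq_prepend_letter: "subst_seq p (prepend [a] W) = prepend (s (p mod k) a) (subst_seq (Suc p) W)"
  unfolding subst_seq_def by (subst concat_seq_unfold) (simp add: prepend_def)

lemma subst_seq_prepend: "subst_seq p (prepend u W) = prepend (subst_word p u) (subst_seq (p + length u) W)"
proof (induction u arbitrary: p)
  case Nil
  then show ?case by simp
next
  case (Cons a u)
  show ?case
    by (subst prepend_Cons, subst subst_seq_prepend_letter, subst Cons) (simp add: prepend_append)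
qed

lemma w_eps_unique: "length (w_eps k s) = k \<and> blk k s (w_eps k s) = []"
  using complete_erasure unfolding completely_erasing_def erasing_def w_eps_def by (rule conjE) (rule theI')

lemma length_w_eps: "length (w_eps k s) = k"
  using w_eps_unique by blast

lemma blk_w_eps: "blk k s (w_eps k s) = []"
  using w_eps_unique by blast

lemma s_nth_w_eps: "i < k \<Longrightarrow> s i (w_eps k s ! i) = []"
  using blk_w_eps unfolding blk_def by auto

lemma subst_word_w_eps_power:
  "p mod k = 0 \<Longrightarrow> subst_word p (concat (replicate n (w_eps k s))) = []"
proof (induction n arbitrary: p)
  case 0
  then show ?case by simp
next
  case (Suc n)
  have "subst_word p (w_eps k s) = []"
    using subst_word_mod[of p] blk_eq_subst_word[OF length_w_eps] blk_w_eps Suc.prems by simp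
  then show ?case using Suc by (simp add: subst_word_append length_w_eps)
qed

lemma length_w_eps_power: "length (concat (replicate n (w_eps k s))) = n * k"
  by (induction n) (auto simp: length_w_eps)

definition erasing_pad :: "bool list \<Rightarrow> bool list" where
  "erasing_pad u = map (\<lambda>j. w_eps k s ! ((length u + j) mod k)) [0..<(k - length u mod k) mod k]"

lemma length_append_erasing_pad: "length (u @ erasing_pad u) mod k = 0"
  using k_pos unfolding erasing_pad_def
  by (simp, metis add.commute le_add_diff_inverse2 mod_add_left_eq mod_le_divisor mod_mod_trivial mod_self)

lemma subst_word_append_erasing_pad: "subst_word 0 (u @ erasing_pad u) = ext_fin k s u"
proof -
  have "subst_word (length u) (erasing_pad u) = []"
    using k_pos unfolding subst_word_conv_concat by (auto simp: erasing_pad_def s_nth_w_eps)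
  then show ?thesis by (simp add: subst_word_append ext_fin_eq_subst_word)
qed

definition image_bound :: nat where
  "image_bound = sum_list (map (\<lambda>i. length (s i True) + length (s i False)) [0..<k])"

lemma length_blk_le: "length (blk k s b) \<le> image_bound"
proof -
  have "length (blk k s b) = sum_list (map (\<lambda>i. length (s i (b ! i))) [0..<k])"
    by (simp add: blk_def length_concat o_def)
  also have "\<dots> \<le> image_bound"
  proof -
    have "length (s i c) \<le> length (s i True) + length (s i False)" for i c
      by (cases c) auto
    then show ?thesis unfolding image_bound_def by (intro sum_list_mono)
  qed
  finally show ?thesis .
qed

lemma optimal_first_block:
  "\<exists>b. length b = k \<and> blk k s b \<noteq> [] \<and> (\<forall>i<length (blk k s b). blk k s b ! i = Y i)"
proof -
  obtain b :: "nat \<Rightarrow> bool list" where b: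
    "\<forall>m. length (b m) = k \<and> blk k s (b m) \<noteq> []"
    "\<forall>m i. i < length (blk k s (b m)) \<longrightarrow> Y ((\<Sum>l<m. length (blk k s (b l))) + i) = blk k s (b m) ! i"
    using optimality unfolding optimal_def by blast
  have "\<forall>i. i < length (blk k s (b 0)) \<longrightarrow> Y i = blk k s (b 0) ! i"
    using spec[OF b(2), of 0] by simp
  then show ?thesis using b(1) by (metis (no_types))
qed

definition fits_prefix :: "bool list \<Rightarrow> bool list \<Rightarrow> bool" where
  "fits_prefix b x \<longleftrightarrow> length b = k \<and> blk k s b \<noteq> [] \<and> length (blk k s b) \<le> length x
     \<and> (\<forall>i<length (blk k s b). blk k s b ! i = x ! i)"

text \<open>The choice is made from the first \<open>image_bound\<close> letters of \<open>Y\<close> only, so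
  that it does not change when \<open>Y\<close> changes beyond them.\<close>

definition lead_block :: "(nat \<Rightarrow> bool) \<Rightarrow> bool list" where
  "lead_block Y = (SOME b. fits_prefix b (map Y [0..<image_bound]))"

definition after_lead :: "(nat \<Rightarrow> bool) \<Rightarrow> nat \<Rightarrow> bool" where
  "after_lead Y n = Y (n + length (blk k s (lead_block Y)))"

lemma lead_block_fits: "fits_prefix (lead_block Y) (map Y [0..<image_bound])"
proof -
  obtain b where "length b = k" "blk k s b \<noteq> []" "\<forall>i<length (blk k s b). blk k s b ! i = Y i"
    using optimal_first_block by blast
  then have "fits_prefix b (map Y [0..<image_bound])"
    using length_blk_le[of b] by (auto simp: fits_prefix_def)
  then show ?thesis unfolding lead_block_def by (rule someI)
qed

lemma length_lead_block: "length (lead_block Y) = k"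
  and blk_lead_block_ne_Nil: "blk k s (lead_block Y) \<noteq> []"
  and nth_blk_lead_block: "i < length (blk k s (lead_block Y)) \<Longrightarrow> blk k s (lead_block Y) ! i = Y i"
  using lead_block_fits[of Y] by (auto simp: fits_prefix_def)

lemma image_bound_pos: "0 < image_bound"
  using length_blk_le[of "lead_block (\<lambda>_. True)"] blk_lead_block_ne_Nil[of "\<lambda>_. True"]
  by (metis length_greater_0_conv order_less_le_trans)

lemma lead_block_ne_w_eps: "lead_block Y \<noteq> w_eps k s"
  using blk_lead_block_ne_Nil blk_w_eps by metis

definition erased_run :: "bool list" where
  "erased_run = concat (replicate image_bound (w_eps k s))"

definition frame_len :: nat where
  "frame_len = Suc image_bound * k"

text \<open>The preimage is a sequence of frames: frame \<open>m\<close> is \<open>erased_run\<close> followed by the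
  lead block of the \<open>m\<close>-th remainder of \<open>Y\<close>. The erased run makes every frame at least as
  long as the part of \<open>Y\<close> it encodes, so that the preimage never looks ahead.\<close>

definition preimage :: "(nat \<Rightarrow> bool) \<Rightarrow> nat \<Rightarrow> bool" where
  "preimage Y n = (erased_run @ lead_block ((after_lead ^^ (n div frame_len)) Y)) ! (n mod frame_len)"

lemma length_erased_run: "length erased_run = image_bound * k"
  by (simp add: erased_run_def length_w_eps_power)

lemma length_frame: "length erased_run + length (lead_block Y) = frame_len"
  by (simp add: length_erased_run length_lead_block frame_len_def)

lemma frame_len_pos: "0 < frame_len"
  using k_pos by (simp add: frame_len_def)

lemma preimage_frame: "j < frame_len \<Longrightarrow>
    preimage Y (m * frame_len + j) = (erased_run @ lead_block ((after_lead ^^ m) Y)) ! j"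
  by (simp add: preimage_def)

lemma preimage_unfold: "preimage Y = prepend (erased_run @ lead_block Y) (preimage (after_lead Y))"
proof
  fix n
  show "preimage Y n = prepend (erased_run @ lead_block Y) (preimage (after_lead Y)) n"
  proof (cases "n < frame_len")
    case True
    then show ?thesis by (simp add: preimage_def prepend_def length_frame)
  next
    case False
    then have "n div frame_len = Suc ((n - frame_len) div frame_len)"
      "n mod frame_len = (n - frame_len) mod frame_len"
      using frame_len_pos by (auto intro: le_div_geq le_mod_geq)
    then show ?thesis
      using False by (simp add: preimage_def prepend_def length_frame funpow_swap1)
  qed
qed

lemma subst_seq_preimage_unfold:
  "subst_seq 0 (preimage Y) = prepend (blk k s (lead_block Y)) (subst_seq 0 (preimage (after_lead Y)))"
proof -
  have "subst_word 0 (erased_run @ lead_block Y) = blk k s (lead_block Y)"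
    using subst_word_mod[of "length erased_run"]
    by (simp add: subst_word_append erased_run_def subst_word_w_eps_power length_w_eps_power
        blk_eq_subst_word[OF length_lead_block])
  moreover have "length (erased_run @ lead_block Y) mod k = 0"
    by (simp only: length_append length_frame frame_len_def mod_mult_self2_is_0)
  then have "subst_seq (length (erased_run @ lead_block Y)) = subst_seq 0"
    using subst_seq_mod by metis
  ultimately show ?thesis
    by (subst preimage_unfold) (simp add: subst_seq_prepend)
qed

lemma subst_seq_preimage: "subst_seq 0 (preimage Y) = Y"
proof -
  have "\<forall>Y. subst_seq 0 (preimage Y) n = Y n" for n
  proof (induction n rule: less_induct)
    case (less n)
    show ?case
    proof
      fix Y
      let ?l = "length (blk k s (lead_block Y))"
      show "subst_seq 0 (preimage Y) n = Y n"
      proof (cases "n < ?l")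
        case True
        then show ?thesis
          by (subst subst_seq_preimage_unfold) (simp add: prepend_def nth_blk_lead_block)
      next
        case False
        have "0 < ?l" using blk_lead_block_ne_Nil[of Y] by simp
        then have "n - ?l < n" using False by linarith
        then show ?thesis
          using less False by (subst subst_seq_preimage_unfold) (simp add: prepend_def after_lead_def)
      qed
    qed
  qed
  then show ?thesis by auto
qed

lemma lead_block_eq_upto:
  assumes "eq_upto L Y Y'" "image_bound \<le> L"
  shows "lead_block Y = lead_block Y'" "eq_upto (L - image_bound) (after_lead Y) (after_lead Y')"
proof -
  have "map Y [0..<image_bound] = map Y' [0..<image_bound]"
    using assms by (auto simp: eq_upto_def)
  then show same: "lead_block Y = lead_block Y'" unfolding lead_block_def by (rule arg_cong)
  show "eq_upto (L - image_bound) (after_lead Y) (after_lead Y')"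
    using assms length_blk_le[of "lead_block Y"] by (auto simp: eq_upto_def after_lead_def same)
qed

lemma lead_block_iterate_eq_upto:
  assumes "eq_upto L Y Y'" "Suc m * image_bound \<le> L"
  shows "lead_block ((after_lead ^^ m) Y) = lead_block ((after_lead ^^ m) Y')"
  using assms
proof (induction m arbitrary: Y Y' L)
  case 0
  then show ?case using lead_block_eq_upto(1)[of L Y Y'] by simp
next
  case (Suc m)
  then have "lead_block ((after_lead ^^ m) (after_lead Y)) = lead_block ((after_lead ^^ m) (after_lead Y'))"
    using lead_block_eq_upto(2)[of L Y Y'] by (intro Suc.IH[of "L - image_bound"]) auto
  then show ?case by (simp add: funpow_swap1)
qed

lemma eq_upto_preimage:
  assumes agree: "eq_upto L Y Y'"
  shows "eq_upto L (preimage Y) (preimage Y')"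
  unfolding eq_upto_def
proof (intro allI impI)
  fix n assume "n < L"
  define m r where "m = n div frame_len" and "r = n mod frame_len"
  have n: "n = m * frame_len + r" "r < frame_len"
    unfolding m_def r_def using frame_len_pos by (simp_all add: div_mult_mod_eq[symmetric])
  show "preimage Y n = preimage Y' n"
  proof (cases "r < image_bound * k")
    case True
    then show ?thesis by (simp add: n preimage_frame nth_append length_erased_run)
  next
    case False
    then have "image_bound \<le> r" "image_bound \<le> frame_len"
      using k_pos by (auto simp: frame_len_def intro: order_trans[of _ "image_bound * k"])
    moreover from this(2) have "m * image_bound \<le> m * frame_len" by (rule mult_le_mono2)
    ultimately have "Suc m * image_bound \<le> L"
      using \<open>n < L\<close> n(1) by (simp only: mult_Suc)
    then show ?thesis using lead_block_iterate_eq_upto[OF agree] by (simp add: n preimage_frame)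
  qed
qed

definition w_eps_seq :: "nat \<Rightarrow> bool" where
  "w_eps_seq j = w_eps k s ! (j mod k)"

lemma prepend_preimage_ne_w_eps_seq:
  assumes "length A mod k = 0"
  shows "prepend A (preimage Z) \<noteq> w_eps_seq"
proof
  assume eq: "prepend A (preimage Z) = w_eps_seq"
  have "lead_block Z ! j = w_eps k s ! j" if "j < k" for j
  proof -
    have "image_bound * k + j < frame_len" using that by (simp add: frame_len_def)
    then have "prepend A (preimage Z) (length A + (image_bound * k + j)) = lead_block Z ! j"
      using preimage_frame[of _ Z 0] by (simp add: prepend_def nth_append length_erased_run)
    moreover have "w_eps_seq (length A + (image_bound * k + j)) = w_eps k s ! j"
      using assms that by (simp add: w_eps_seq_def mod_add_left_eq[symmetric])
    ultimately show ?thesis using eq by simp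
  qed
  then have "lead_block Z = w_eps k s"
    by (intro nth_equalityI) (simp_all add: length_lead_block length_w_eps)
  then show False using lead_block_ne_w_eps by blast
qed

lemma preimage_frame_has_one: "\<exists>j<frame_len. preimage Y (m * frame_len + j)"
proof (cases "\<exists>j<k. w_eps k s ! j")
  case True
  then obtain j where j: "j < k" "w_eps k s ! j" by blast
  obtain b where b: "image_bound = Suc b" using image_bound_pos by (cases image_bound) auto
  have "j < length erased_run" "j < frame_len"
    using j(1) b by (simp_all add: length_erased_run frame_len_def)
  moreover have "erased_run ! j = w_eps k s ! j"
    using j(1) by (simp add: erased_run_def b nth_append length_w_eps)
  ultimately show ?thesis using j(2) by (intro exI[of _ j]) (simp add: preimage_frame nth_append)
next
  case False
  let ?b = "lead_block ((after_lead ^^ m) Y)"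
  have "\<exists>j<k. ?b ! j"
  proof (rule ccontr)
    assume "\<not> (\<exists>j<k. ?b ! j)"
    then have "?b = w_eps k s"
      using False by (intro nth_equalityI) (auto simp: length_lead_block length_w_eps)
    then show False using lead_block_ne_w_eps by blast
  qed
  then obtain j where j: "j < k" "?b ! j" by blast
  then have "image_bound * k + j < frame_len" by (simp add: frame_len_def)
  then show ?thesis
    using j by (intro exI[of _ "image_bound * k + j"]) (simp add: preimage_frame nth_append length_erased_run)
qed

lemma INFM_preimage: "\<exists>\<^sub>\<infinity>n. preimage Y n"
  unfolding INFM_nat
proof
  fix n
  obtain j where "j < frame_len" "preimage Y (Suc n * frame_len + j)"
    using preimage_frame_has_one by blast
  moreover have "n < Suc n * frame_len + j"
    using frame_len_pos mult_le_mono2[of 1 frame_len "Suc n"] by simp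
  ultimately show "\<exists>m>n. preimage Y m" by blast
qed

section \<open>Steering a cylinder onto a given word\<close>

definition erase_time :: "bool list \<Rightarrow> nat" where
  "erase_time v = (LEAST n. (ext_fin k s ^^ n) v = [])"

lemma erase_time: "(ext_fin k s ^^ erase_time v) v = []"
proof -
  have "\<exists>n. (ext_fin k s ^^ n) v = []"
    using complete_erasure unfolding completely_erasing_def by blast
  then show ?thesis unfolding erase_time_def by (rule LeastI_ex)
qed

lemma erase_time_pos: "v \<noteq> [] \<Longrightarrow> 0 < erase_time v"
  using erase_time[of v] by (cases "erase_time v") auto

function steer_tail :: "bool list \<Rightarrow> (nat \<Rightarrow> bool) \<Rightarrow> nat \<Rightarrow> nat \<Rightarrow> bool" where
  "steer_tail v w i =
     (if i < erase_time v
      then prepend (erasing_pad ((ext_fin k s ^^ i) v)) (preimage (steer_tail v w (Suc i)))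
      else w)"
  by auto
termination by (relation "measure (\<lambda>(v, w, i). erase_time v - i)") auto

declare steer_tail.simps [simp del]

definition stage :: "bool list \<Rightarrow> (nat \<Rightarrow> bool) \<Rightarrow> nat \<Rightarrow> nat \<Rightarrow> bool" where
  "stage v w i = prepend ((ext_fin k s ^^ i) v) (steer_tail v w i)"

definition steer :: "bool list \<Rightarrow> (nat \<Rightarrow> bool) \<Rightarrow> nat \<Rightarrow> bool" where
  "steer v w = prepend v (steer_tail v w 0)"

lemma stage_0: "stage v w 0 = steer v w"
  by (simp add: stage_def steer_def)

lemma stage_erase_time: "stage v w (erase_time v) = w"
  by (simp add: stage_def erase_time steer_tail.simps)

lemma stage_step: "i < erase_time v \<Longrightarrow> stage v w i =
    prepend ((ext_fin k s ^^ i) v @ erasing_pad ((ext_fin k s ^^ i) v)) (preimage (steer_tail v w (Suc i)))"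
  by (simp add: stage_def prepend_append steer_tail.simps[of v w i])

lemma subst_seq_stage:
  assumes "i < erase_time v"
  shows "subst_seq 0 (stage v w i) = stage v w (Suc i)"
proof -
  let ?A = "(ext_fin k s ^^ i) v @ erasing_pad ((ext_fin k s ^^ i) v)"
  have "subst_seq (length ?A) = subst_seq 0"
    using subst_seq_mod[of "length ?A"] length_append_erasing_pad by metis
  then have "subst_seq 0 (stage v w i)
      = prepend (ext_fin k s ((ext_fin k s ^^ i) v)) (steer_tail v w (Suc i))"
    unfolding stage_step[OF assms] subst_seq_prepend
    by (simp add: subst_word_append_erasing_pad subst_seq_preimage)
  then show ?thesis by (simp add: stage_def)
qed

lemma INFM_stage: "i < erase_time v \<Longrightarrow> \<exists>\<^sub>\<infinity>n. stage v w i n"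
  by (simp add: stage_step INFM_prepend INFM_preimage)

lemma stage_ne_w_eps_seq: "i < erase_time v \<Longrightarrow> stage v w i \<noteq> w_eps_seq"
  unfolding stage_step by (rule prepend_preimage_ne_w_eps_seq[OF length_append_erasing_pad])

lemma eq_upto_steer_tail: "eq_upto L w w' \<Longrightarrow> eq_upto L (steer_tail v w i) (steer_tail v w' i)"
proof (induction v w i rule: steer_tail.induct)
  case (1 v w i)
  show ?case
  proof (cases "i < erase_time v")
    case True
    then have "eq_upto L (preimage (steer_tail v w (Suc i))) (preimage (steer_tail v w' (Suc i)))"
      using 1 by (intro eq_upto_preimage)
    then show ?thesis
      using True by (simp add: steer_tail.simps[of v _ i] eq_upto_mono[OF eq_upto_prepend])
  next
    case False
    then show ?thesis using 1(2) by (simp add: steer_tail.simps[of v _ i])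
  qed
qed

lemma eq_upto_steer: "eq_upto L w w' \<Longrightarrow> eq_upto (L + length v) (steer v w) (steer v w')"
  unfolding steer_def by (intro eq_upto_prepend eq_upto_steer_tail)

lemma eq_upto_Suc_steer:
  assumes "v \<noteq> []" "eq_upto L w w'"
  shows "eq_upto (Suc L) (steer v w) (steer v w')"
proof (rule eq_upto_mono)
  show "eq_upto (L + length v) (steer v w) (steer v w')" using assms(2) by (rule eq_upto_steer)
  show "Suc L \<le> L + length v" using assms(1) by (simp add: Suc_leI)
qed

lemma INFM_steer: "v \<noteq> [] \<Longrightarrow> \<exists>\<^sub>\<infinity>n. steer v w n"
  using INFM_stage[OF erase_time_pos] by (simp add: stage_0)

lemma val_inf_steer_bounds:
  "val_fin v \<le> val_inf (steer v w)" "val_inf (steer v w) \<le> val_fin v + 1 / 2 ^ length v"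
  unfolding steer_def by (rule val_inf_prepend_bounds)+

lemma f_sigma_val_inf:
  assumes "\<exists>\<^sub>\<infinity>n. X n" "X \<noteq> w_eps_seq" "\<exists>\<^sub>\<infinity>n. subst_seq 0 X n"
  shows "f_sigma k s (val_inf X) = val_inf (subst_seq 0 X)"
proof -
  define F where "F = (\<lambda>j. s (j mod k) (X j))"
  have "val_sub k s X = (\<Sum>j. val_fin (F j) / 2 ^ block_start F j)"
    by (simp add: val_sub_def pre_len_def block_start_def F_def)
  also have "\<dots> = val_inf (subst_seq 0 X)"
    using sums_blocks_val_inf[of F] assms(3) by (simp add: subst_seq_def F_def sums_iff)
  finally have "val_sub k s X = val_inf (subst_seq 0 X)" .
  moreover obtain m where "X m" using assms(1) by (auto simp: INFM_nat)
  ultimately show ?thesis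
    using assms(1,2) val_inf_pos[of X] val_inf_le_1[of X]
    by (simp add: f_sigma_def tilde_val_inf w_eps_seq_def[abs_def])
qed

lemma f_sigma_iter_stage:
  assumes "\<exists>\<^sub>\<infinity>n. w n" "i \<le> erase_time v"
  shows "(f_sigma k s ^^ i) (val_inf (steer v w)) = val_inf (stage v w i)"
  using assms(2)
proof (induction i)
  case 0
  then show ?case by (simp add: stage_0)
next
  case (Suc i)
  then have i: "i < erase_time v" by simp
  have "\<exists>\<^sub>\<infinity>n. stage v w (Suc i) n"
    using Suc.prems assms(1) INFM_stage[of "Suc i"]
    by (cases "Suc i = erase_time v") (auto simp: stage_erase_time)
  then show ?case
    using Suc f_sigma_val_inf[OF INFM_stage[OF i] stage_ne_w_eps_seq[OF i]]
    by (simp add: subst_seq_stage[OF i])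
qed

lemma f_sigma_iter_steer:
  "\<exists>\<^sub>\<infinity>n. w n \<Longrightarrow> (f_sigma k s ^^ erase_time v) (val_inf (steer v w)) = val_inf w"
  using f_sigma_iter_stage[of w "erase_time v" v] by (simp add: stage_erase_time)

section \<open>Devaney chaos\<close>

lemma f_sigma_dense_periodic: "dense_periodic (f_sigma k s)"
  unfolding dense_periodic_def
proof (intro ballI allI impI)
  fix y e :: real assume y: "y \<in> {0..1}" and e: "0 < e"
  obtain v where v: "v \<noteq> []" "val_fin v \<le> y" "y \<le> val_fin v + 1 / 2 ^ length v" "1 / 2 ^ length v < e"
    using short_dyadic_interval[of y e] y e by auto
  have "\<exists>R :: nat \<Rightarrow> nat \<Rightarrow> bool. (\<lambda>i. steer v (R i)) = R"
  proof (rule prefix_contraction_fixpoint)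
    fix L and R R' :: "nat \<Rightarrow> nat \<Rightarrow> bool"
    assume "\<forall>i. eq_upto L (R i) (R' i)"
    then show "\<forall>i. eq_upto (Suc L) (steer v (R i)) (steer v (R' i))"
      using eq_upto_Suc_steer[OF v(1)] by blast
  qed
  then obtain W where W: "steer v W = W" by metis
  have "\<exists>\<^sub>\<infinity>n. W n" using INFM_steer[OF v(1), of W] W by simp
  then have "(f_sigma k s ^^ erase_time v) (val_inf W) = val_inf W"
    using f_sigma_iter_steer[of W v] W by simp
  moreover have "\<bar>val_inf W - y\<bar> < e"
    using val_inf_steer_bounds[of v W] W v by simp
  ultimately show "\<exists>p\<in>{0..1}. \<bar>p - y\<bar> < e \<and> (\<exists>n>0. (f_sigma k s ^^ n) p = p)"
    using erase_time_pos[OF v(1)] val_inf_nonneg val_inf_le_1 by auto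
qed

lemma f_sigma_sensitive: "sensitive (f_sigma k s)"
  unfolding sensitive_def
proof (intro exI[of _ "1/4"] conjI ballI allI impI)
  fix x d :: real assume x: "x \<in> {0..1}" and d: "0 < d"
  obtain v where v: "v \<noteq> []" "val_fin v \<le> x" "x \<le> val_fin v + 1 / 2 ^ length v" "1 / 2 ^ length v < d"
    using short_dyadic_interval[of x d] x d by auto
  define ones where "ones = (\<lambda>_::nat. True)"
  have ones: "\<exists>\<^sub>\<infinity>n. ones n" "val_inf ones = 1"
    by (simp_all add: ones_def val_inf_const_True)
  have half: "\<exists>\<^sub>\<infinity>n. prepend [False] ones n" "val_inf (prepend [False] ones) = 1/2"
    using ones INFM_prepend by (auto simp: val_inf_prepend val_fin_def)
  have close: "\<bar>x - val_inf (steer v w)\<bar> < d" "val_inf (steer v w) \<in> {0..1}" for w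
    using val_inf_steer_bounds[of v w] v val_inf_nonneg val_inf_le_1 by auto
  have "(f_sigma k s ^^ erase_time v) (val_inf (steer v ones)) = 1"
    "(f_sigma k s ^^ erase_time v) (val_inf (steer v (prepend [False] ones))) = 1/2"
    using f_sigma_iter_steer ones half by simp_all
  moreover have "1/4 \<le> \<bar>(f_sigma k s ^^ erase_time v) x - 1\<bar> \<or>
      1/4 \<le> \<bar>(f_sigma k s ^^ erase_time v) x - 1/2\<bar>"
    by linarith
  ultimately show "\<exists>z\<in>{0..1}. \<bar>x - z\<bar> < d \<and> (\<exists>n. 1/4 \<le> \<bar>(f_sigma k s ^^ n) x - (f_sigma k s ^^ n) z\<bar>)"
    using close by metis
qed simp

lemma f_sigma_dense_orbit: "dense_orbit (f_sigma k s)"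
proof -
  define word :: "nat \<Rightarrow> bool list" where "word j = from_nat j @ [True]" for j
  have "\<exists>R :: nat \<Rightarrow> nat \<Rightarrow> bool. (\<lambda>j. steer (word j) (R (Suc j))) = R"
  proof (rule prefix_contraction_fixpoint)
    fix L and R R' :: "nat \<Rightarrow> nat \<Rightarrow> bool"
    assume "\<forall>i. eq_upto L (R i) (R' i)"
    then show "\<forall>j. eq_upto (Suc L) (steer (word j) (R (Suc j))) (steer (word j) (R' (Suc j)))"
      using eq_upto_Suc_steer[of "word _"] by (simp add: word_def)
  qed
  then obtain R where R: "R j = steer (word j) (R (Suc j))" for j by metis
  have INFM_R: "\<exists>\<^sub>\<infinity>n. R j n" for j
    using INFM_steer[of "word j" "R (Suc j)"] R[of j] by (simp add: word_def)
  define time where "time j = (\<Sum>i<j. erase_time (word i))" for j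
  have orbit: "(f_sigma k s ^^ time j) (val_inf (R 0)) = val_inf (R j)" for j
  proof (induction j)
    case 0
    then show ?case by (simp add: time_def)
  next
    case (Suc j)
    have "time (Suc j) = erase_time (word j) + time j" by (simp add: time_def)
    then show ?case
      using Suc f_sigma_iter_steer[OF INFM_R[of "Suc j"], of "word j"] R[of j]
      by (simp add: funpow_add)
  qed
  have "\<forall>y\<in>{0..1}. \<forall>e>0. \<exists>n. \<bar>(f_sigma k s ^^ n) (val_inf (R 0)) - y\<bar> < e"
  proof (intro ballI allI impI)
    fix y e :: real assume y: "y \<in> {0..1}" and e: "0 < e"
    obtain v where v: "val_fin v \<le> y" "y \<le> val_fin v + 1 / 2 ^ length v" "1 / 2 ^ length v < e"
      using short_dyadic_interval[of y e] y e by auto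
    have "R (to_nat v) = prepend v (prepend [True] (steer_tail (word (to_nat v)) (R (Suc (to_nat v))) 0))"
      using R[of "to_nat v"] by (simp add: steer_def word_def prepend_append)
    then have "val_fin v \<le> val_inf (R (to_nat v))"
      "val_inf (R (to_nat v)) \<le> val_fin v + 1 / 2 ^ length v"
      by (simp_all only: val_inf_prepend_bounds)
    then have "\<bar>val_inf (R (to_nat v)) - y\<bar> < e"
      using v by (simp add: abs_less_iff)
    then show "\<exists>n. \<bar>(f_sigma k s ^^ n) (val_inf (R 0)) - y\<bar> < e"
      using orbit by metis
  qed
  then show ?thesis
    unfolding dense_orbit_def
    by (intro bexI[of _ "val_inf (R 0)"]) (simp_all add: val_inf_nonneg val_inf_le_1)
qed

end

theorem mainTheorem15:
  fixes k :: nat and s :: "nat \<Rightarrow> bool \<Rightarrow> bool list"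
  assumes "k \<ge> 2"
    and "completely_erasing k s"
    and "w_eps k s \<noteq> replicate k True"
    and "optimal k s"
  shows "dense_orbit (f_sigma k s) \<and> dense_periodic (f_sigma k s) \<and> sensitive (f_sigma k s)"
proof -
  interpret erasing_substitution k s
    using assms(1,2,4) by unfold_locales simp_all
  show ?thesis
    using f_sigma_dense_orbit f_sigma_dense_periodic f_sigma_sensitive by blast
qed

end
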